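(* Let $1\le p\le q$ and let $\mu=(a_1,\dots,a_p\mid b_1,\dots,b_q)\in\mathbb{Z}^{p+q}$ be $\Delta^+(\mathfrak{k},\mathfrak{t})$-dominant and u-large, such that $\mu-\beta$ is also $\Delta^+(\mathfrak{k},\mathfrak{t})$-dominant. (a) If $b_1\ge 2p+1$, then $\|\mu\|_{\mathrm{spin}}>\|\mu-\beta\|_{\mathrm{spin}}$. (b) If $a_1\ge 2q+1$, then $\|\mu\|_{\mathrm{spin}}>\|\mu-\beta\|_{\mathrm{spin}}$.
   Context: Weights are vectors in $\mathbb{R}^n$, $n=p+q$, written $(x_1,\dots,x_p\mid y_1,\dots,y_q)$, with Euclidean norm $\|\cdot\|$. $\rho_c=(p,p-1,\dots,1\mid q,q-1,\dots,1)$, $\beta=(1,0,\dots,0\mid1,0,\dots,0)$. $\Delta^+(\mathfrak{k},\mathfrak{t})$-dominant means $x_1\ge\cdots\ge x_p\ge0$ and $y_1\ge\cdots\ge y_q\ge0$. For $\nu\in\mathbb{Z}^n$, $\{\nu\}$ is obtained by taking absolute values of all coordinates and sorting the first $p$ and the last $q$ coordinates separately in decreasing order; $\|\nu\|_{\mathfrak{k}}:=\|\{\nu\}+\rho_c\|$. $\Omega_{p,q}$ is the set of $(x\mid y)\in\mathbb{Z}^n$ with $q\ge x_1\ge\cdots\ge x_p\ge0$ and $y_j=\#\{i\mid q-x_i\ge j\}$ ($1\le j\le q$). Spin norm: $\|\nu\|_{\mathrm{spin}}=\min_{\tau\in\Omega_{p,q}}\|\nu-\tau\|_{\mathfrak{k}}$.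 $\mu$ is u-large iff there exist $0\le f\le p$, $0\le g\le q$ with $\sum_{i=1}^f a_i+\sum_{j=1}^g b_j>2pq-2(p-f)(q-g)$. *)

theory Defs
  imports Complex_Main
begin

text \<open>A weight (x_1,...,x_p | y_1,...,y_q) in Z^(p+q) is represented as a pair of
  integer lists (xs, ys) with length xs = p and length ys = q; list index i
  corresponds to coordinate i+1.\<close>

type_synonym weight = "int list \<times> int list"

definition wadd :: "weight \<Rightarrow> weight \<Rightarrow> weight" where
  "wadd u v = (map2 (+) (fst u) (fst v), map2 (+) (snd u) (snd v))"

definition wsub :: "weight \<Rightarrow> weight \<Rightarrow> weight" where
  "wsub u v = (map2 (-) (fst u) (fst v), map2 (-) (snd u) (snd v))"

definition wnorm :: "weight \<Rightarrow> real" where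
  "wnorm v = sqrt (real_of_int (sum_list (map (\<lambda>x. x^2) (fst v)) + sum_list (map (\<lambda>x. x^2) (snd v))))"

definition rho_c :: "nat \<Rightarrow> nat \<Rightarrow> weight" where
  "rho_c p q = (map int (rev [1..<p+1]), map int (rev [1..<q+1]))"

definition beta :: "nat \<Rightarrow> nat \<Rightarrow> weight" where
  "beta p q = (1 # replicate (p - 1) 0, 1 # replicate (q - 1) 0)"

definition k_dominant :: "weight \<Rightarrow> bool" where
  "k_dominant v \<longleftrightarrow> sorted_wrt (\<ge>) (fst v) \<and> (\<forall>x\<in>set (fst v). x \<ge> 0)
                   \<and> sorted_wrt (\<ge>) (snd v) \<and> (\<forall>y\<in>set (snd v). y \<ge> 0)"

definition brace :: "weight \<Rightarrow> weight" where
  "brace v = (rev (sort (map abs (fst v))), rev (sort (map abs (snd v))))"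

definition knorm :: "nat \<Rightarrow> nat \<Rightarrow> weight \<Rightarrow> real" where
  "knorm p q v = wnorm (wadd (brace v) (rho_c p q))"

definition Omega :: "nat \<Rightarrow> nat \<Rightarrow> weight set" where
  "Omega p q = {(xs, ys). length xs = p \<and> length ys = q
      \<and> (\<forall>i<p. xs ! i \<le> int q \<and> xs ! i \<ge> 0) \<and> sorted_wrt (\<ge>) xs
      \<and> (\<forall>j\<in>{1..q}. ys ! (j - 1) = int (card {i. i < p \<and> int q - xs ! i \<ge> int j}))}"

definition spin_norm :: "nat \<Rightarrow> nat \<Rightarrow> weight \<Rightarrow> real" where
  "spin_norm p q v = Min ((\<lambda>\<tau>. knorm p q (wsub v \<tau>)) ` Omega p q)"

definition u_large :: "nat \<Rightarrow> nat \<Rightarrow> weight \<Rightarrow> bool" where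
  "u_large p q v \<longleftrightarrow> (\<exists>f\<le>p. \<exists>g\<le>q.
      sum_list (take f (fst v)) + sum_list (take g (snd v))
        > 2 * int p * int q - 2 * (int p - int f) * (int q - int g))"

end

theory Submission
  imports Defs "HOL-Library.Multiset"
begin

(*
  If c_1 \<ge> ... \<ge> c_n are the absolute values of one block of \<nu>, that block contributes
  \<Sum>_k (c_k + n + 1 - k)^2 = \<Sum>_k k^2 + E(c) to the square of the k-norm, where the energy
  E(c) = \<Sum>_k c_k^2 + 2 \<Sum>_k (n + 1 - k) c_k is a symmetric function of the c_k.  E drops
  strictly when a positive c_k is lowered by one, and does not grow when a unit is moved from a
  larger c_k to a smaller one (it drops if they differ by at least 2).

  For (a) take \<tau> = (x | y) in Omega_{p,q} with |\<mu> - \<tau>|_k = |\<mu>|_spin; it suffices to find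
  \<tau>' in Omega_{p,q} with a smaller energy for \<mu> - \<beta> - \<tau>'.  If x_1 < a_1, then \<tau>' = \<tau>
  lowers the positive first entries a_1 - x_1 and b_1 - y_1 of both blocks.  Otherwise \<tau>'
  removes a corner box from the Young diagram of x: the last x_k equal to x_1 drops by one and
  y_{q - x_1 + 1} rises by one.  In the first block this moves a unit from position k to
  position 1.  In the second block both b_1 - y_1 and b_j - y_j (j = q - x_1 + 1) drop by one;
  since y_j < p and b_1 \<ge> 2p + 1, b_1 - y_1 \<ge> p + 1 exceeds |b_j - y_j| by at least 2 when
  b_j - y_j \<le> 0, so the energy drops in every case.

  Transposing diagrams identifies Omega_{p,q} with Omega_{q,p}, so the spin norm is symmetric in
  the two blocks and (b) is (a) with the blocks exchanged.
*)

section \<open>The energy of a block\<close>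

(* rho_energy M is E(c) for the decreasing enumeration c of M, since
   \<Sum>_{x,y} max x y = \<Sum>_k (2(n - k) + 1) c_k; this form is visibly symmetric. *)
definition rho_energy :: "int multiset \<Rightarrow> int" where
  "rho_energy M = (\<Sum>x\<in>#M. x^2 + x) + (\<Sum>x\<in>#M. \<Sum>y\<in>#M. max x y)"

lemma rho_energy_add_mset:
  "rho_energy (add_mset x M) = rho_energy M + x^2 + 2 * x + 2 * (\<Sum>y\<in>#M. max x y)"
proof -
  have "(\<Sum>y\<in>#M. max y x) = (\<Sum>y\<in>#M. max x y)"
    by (simp add: max.commute)
  then show ?thesis
    unfolding rho_energy_def by (simp add: sum_mset.distrib algebra_simps)
qed

lemma sum_sq_sorted_plus_rho:
  assumes "sorted_wrt (\<ge>) c"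
  shows "sum_list (map (\<lambda>z. z^2) (map2 (+) c (map int (rev [1..<length c + 1]))))
           = rho_energy (mset c) + (\<Sum>k=1..length c. int k^2)"
  using assms
proof (induction c)
  case Nil
  then show ?case by (simp add: rho_energy_def)
next
  case (Cons x c)
  have "(\<Sum>y\<in>#mset c. max x y) = (\<Sum>y\<in>#mset c. x)"
    using Cons.prems by (intro arg_cong[where f=sum_mset] image_mset_cong) (auto simp: max_def)
  then have "(\<Sum>y\<in>#mset c. max x y) = int (length c) * x"
    by simp
  with Cons show ?case
    by (simp add: rho_energy_add_mset power2_eq_square algebra_simps)
qed

lemma rho_energy_decrement:
  assumes "1 \<le> x"
  shows "rho_energy (add_mset (x - 1) M) < rho_energy (add_mset x M)"
proof -
  have "(\<Sum>y\<in>#M. max (x - 1) y) \<le> (\<Sum>y\<in>#M. max x y)"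
    by (rule sum_mset_mono) auto
  with assms show ?thesis
    unfolding rho_energy_add_mset by (simp add: power2_eq_square algebra_simps)
qed

lemma sum_mset_max_transfer_le:
  fixes x y :: int
  assumes "y + 1 \<le> x"
  shows "(\<Sum>z\<in>#M. max (x - 1) z) + (\<Sum>z\<in>#M. max (y + 1) z) \<le> (\<Sum>z\<in>#M. max x z) + (\<Sum>z\<in>#M. max y z)"
proof -
  have "(\<Sum>z\<in>#M. max (x - 1) z + max (y + 1) z) \<le> (\<Sum>z\<in>#M. max x z + max y z)"
    by (rule sum_mset_mono) (use assms in auto)
  then show ?thesis by (simp add: sum_mset.distrib)
qed

lemma rho_energy_transfer_le:
  fixes x y :: int
  assumes "y + 1 \<le> x"
  shows "rho_energy (add_mset (x - 1) (add_mset (y + 1) M)) \<le> rho_energy (add_mset x (add_mset y M))"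
proof -
  have "(x - 1)^2 + (y + 1)^2 + 2 * max (x - 1) (y + 1) \<le> x^2 + y^2 + 2 * max x y"
    using assms by (auto simp: max_def power2_eq_square algebra_simps)
  with sum_mset_max_transfer_le[OF assms, of M] show ?thesis
    unfolding rho_energy_add_mset by simp
qed

lemma rho_energy_transfer_less:
  fixes x y :: int
  assumes "y + 2 \<le> x"
  shows "rho_energy (add_mset (x - 1) (add_mset (y + 1) M)) < rho_energy (add_mset x (add_mset y M))"
proof -
  have "(x - 1)^2 + (y + 1)^2 + 2 * max (x - 1) (y + 1) < x^2 + y^2 + 2 * max x y"
    using assms by (auto simp: max_def power2_eq_square algebra_simps)
  with sum_mset_max_transfer_le[of y x M] assms show ?thesis
    unfolding rho_energy_add_mset by simp
qed

lemma mset_update_pair: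
  assumes "i < length L" and "j < length L" and "i \<noteq> j"
  obtains R where "mset L = add_mset (L ! i) (add_mset (L ! j) R)"
    and "mset (L[i := u, j := v]) = add_mset u (add_mset v R)"
proof
  let ?R = "image_mset (nth L) (mset_set ({..<length L} - {i, j}))"
  have "mset_set ({..<length L} - {i}) = add_mset j (mset_set ({..<length L} - {i} - {j}))"
    by (rule mset_set.remove) (use assms in auto)
  moreover have "{..<length L} - {i} - {j} = {..<length L} - {i, j}"
    by auto
  ultimately have idx: "mset_set {..<length L} = add_mset i (add_mset j (mset_set ({..<length L} - {i, j})))"
    using assms by (simp add: mset_set.remove[of "{..<length L}" i])
  have nth_image: "mset xs = image_mset (nth xs) (mset_set {..<length xs})" for xs :: "'a list"
    by (metis map_nth mset_map mset_upt lessThan_atLeast0)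
  show "mset L = add_mset (L ! i) (add_mset (L ! j) ?R)"
    using nth_image[of L] idx by simp
  have "image_mset (nth (L[i := u, j := v])) (mset_set ({..<length L} - {i, j})) = ?R"
    by (rule image_mset_cong) auto
  then show "mset (L[i := u, j := v]) = add_mset u (add_mset v ?R)"
    using nth_image[of "L[i := u, j := v]"] idx assms by simp
qed

definition abs_energy :: "int list \<Rightarrow> int" where
  "abs_energy L = rho_energy (mset (map abs L))"

lemma knorm_eq_sqrt_abs_energy:
  assumes "length u = p" and "length w = q"
  shows "knorm p q (u, w) = sqrt (abs_energy u + abs_energy w + (\<Sum>k=1..p. int k^2) + (\<Sum>k=1..q. int k^2))"
proof -
  have "sum_list (map (\<lambda>z. z^2) (map2 (+) (rev (sort (map abs v))) (map int (rev [1..<length v + 1]))))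
          = rho_energy (mset (map abs v)) + (\<Sum>k=1..length v. int k^2)" for v :: "int list"
    using sum_sq_sorted_plus_rho[of "rev (sort (map abs v))"] by (simp add: sorted_wrt_rev)
  from this[of u] this[of w] assms show ?thesis
    unfolding knorm_def wnorm_def wadd_def brace_def rho_c_def abs_energy_def by (simp add: algebra_simps)
qed

lemma knorm_less_knorm:
  assumes "length u = p" and "length w = q" and "length u' = p" and "length w' = q"
    and "abs_energy u' + abs_energy w' < abs_energy u + abs_energy w"
  shows "knorm p q (u', w') < knorm p q (u, w)"
  using assms by (simp add: knorm_eq_sqrt_abs_energy)

lemma abs_energy_decrement:
  assumes "i < length L" and "0 < L ! i"
  shows "abs_energy (L[i := L ! i - 1]) < abs_energy L"
proof -
  let ?R = "mset (map abs L) - {#\<bar>L ! i\<bar>#}"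
  have "mset (map abs L) = add_mset \<bar>L ! i\<bar> ?R"
    using assms(1) by simp
  moreover have "mset (map abs (L[i := L ! i - 1])) = add_mset (\<bar>L ! i\<bar> - 1) ?R"
    using assms by (simp add: map_update mset_update)
  ultimately show ?thesis
    unfolding abs_energy_def using rho_energy_decrement[of "\<bar>L ! i\<bar>" ?R] assms(2) by simp
qed

lemma abs_energy_transfer_le:
  assumes "i < length L" and "j < length L" and "i \<noteq> j" and "\<bar>L ! j\<bar> + 1 \<le> \<bar>L ! i\<bar>"
    and "\<bar>u\<bar> = \<bar>L ! i\<bar> - 1" and "\<bar>v\<bar> = \<bar>L ! j\<bar> + 1"
  shows "abs_energy (L[i := u, j := v]) \<le> abs_energy L"
proof -
  obtain R where "mset (map abs L) = add_mset \<bar>L ! i\<bar> (add_mset \<bar>L ! j\<bar> R)"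
    and "mset (map abs (L[i := u, j := v])) = add_mset \<bar>u\<bar> (add_mset \<bar>v\<bar> R)"
    using mset_update_pair[of i "map abs L" j "\<bar>u\<bar>" "\<bar>v\<bar>"] assms(1-3) by (auto simp: map_update)
  then show ?thesis
    unfolding abs_energy_def using rho_energy_transfer_le[OF assms(4), of R] assms(5,6) by simp
qed

lemma abs_energy_transfer_less:
  assumes "i < length L" and "j < length L" and "i \<noteq> j" and "\<bar>L ! j\<bar> + 2 \<le> \<bar>L ! i\<bar>"
    and "\<bar>u\<bar> = \<bar>L ! i\<bar> - 1" and "\<bar>v\<bar> = \<bar>L ! j\<bar> + 1"
  shows "abs_energy (L[i := u, j := v]) < abs_energy L"
proof -
  obtain R where "mset (map abs L) = add_mset \<bar>L ! i\<bar> (add_mset \<bar>L ! j\<bar> R)"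
    and "mset (map abs (L[i := u, j := v])) = add_mset \<bar>u\<bar> (add_mset \<bar>v\<bar> R)"
    using mset_update_pair[of i "map abs L" j "\<bar>u\<bar>" "\<bar>v\<bar>"] assms(1-3) by (auto simp: map_update)
  then show ?thesis
    unfolding abs_energy_def using rho_energy_transfer_less[OF assms(4), of R] assms(5,6) by simp
qed

lemma abs_energy_decrement_pair:
  assumes "i < length L" and "j < length L" and "i \<noteq> j" and "0 < L ! i" and "2 - L ! j \<le> L ! i"
  shows "abs_energy (L[i := L ! i - 1, j := L ! j - 1]) < abs_energy L"
proof (cases "0 < L ! j")
  case True
  have "abs_energy (L[i := L ! i - 1, j := L[i := L ! i - 1] ! j - 1]) < abs_energy (L[i := L ! i - 1])"
    by (rule abs_energy_decrement) (use assms True in simp_all)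
  also have "\<dots> < abs_energy L"
    by (rule abs_energy_decrement) (use assms in simp_all)
  finally show ?thesis
    using assms(3) by simp
next
  case False
  then show ?thesis
    using assms by (intro abs_energy_transfer_less) auto
qed

lemma map2_minus_update_left:
  "i < length ys \<Longrightarrow> map2 (-) (xs[i := v]) ys = (map2 (-) xs ys)[i := v - ys ! i]"
  by (metis (no_types, lifting) case_prod_conv list_update_id map_update zip_update)

lemma map2_minus_update_right:
  "i < length xs \<Longrightarrow> map2 (-) xs (ys[i := w]) = (map2 (-) xs ys)[i := xs ! i - w]"
  by (metis (no_types, lifting) case_prod_conv list_update_id map_update zip_update)

lemma abs_energy_lower_max_part_le:
  assumes "length a = length x" and "k < length x" and "x ! k = x ! 0" and "a ! 0 \<le> x ! 0"
    and "0 < k \<Longrightarrow> a ! k < a ! 0"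
  shows "abs_energy (map2 (-) (a[0 := a ! 0 - 1]) (x[k := x ! k - 1])) \<le> abs_energy (map2 (-) a x)"
proof (cases "k = 0")
  case True
  then have "map2 (-) (a[0 := a ! 0 - 1]) (x[k := x ! k - 1]) = map2 (-) a x"
    using assms(1,2) list_update_id[of "map2 (-) a x" 0]
    by (simp add: map2_minus_update_left map2_minus_update_right)
  then show ?thesis
    by simp
next
  case False
  let ?U = "map2 (-) a x"
  have "0 < length x"
    using assms(2) by linarith
  have "map2 (-) (a[0 := a ! 0 - 1]) (x[k := x ! k - 1]) = ?U[k := ?U ! k + 1, 0 := ?U ! 0 - 1]"
    using assms(1-3) False \<open>0 < length x\<close> by (intro nth_equalityI) (auto simp: nth_list_update)
  also have "abs_energy \<dots> \<le> abs_energy ?U"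
    by (rule abs_energy_transfer_le) (use assms False \<open>0 < length x\<close> in auto)
  finally show ?thesis .
qed

lemma abs_energy_lower_head_raise_partner_less:
  assumes "length b = length y" and "j < length y" and "0 \<le> b ! j" and "0 \<le> y ! j"
    and "y ! j + 2 \<le> b ! 0 - y ! 0"
  shows "abs_energy (map2 (-) (b[0 := b ! 0 - 1]) (y[j := y ! j + 1])) < abs_energy (map2 (-) b y)"
proof -
  let ?V = "map2 (-) b y"
  have "0 < length y"
    using assms(2) by linarith
  show ?thesis
  proof (cases "j = 0")
    case True
    let ?W = "?V[0 := ?V ! 0 - 1]"
    have "map2 (-) (b[0 := b ! 0 - 1]) (y[j := y ! j + 1]) = ?W[0 := ?W ! 0 - 1]"
      using assms(1) True \<open>0 < length y\<close> by (intro nth_equalityI) (auto simp: nth_list_update)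
    also have "abs_energy \<dots> < abs_energy ?W"
      by (rule abs_energy_decrement) (use assms True \<open>0 < length y\<close> in auto)
    also have "\<dots> < abs_energy ?V"
      by (rule abs_energy_decrement) (use assms True \<open>0 < length y\<close> in auto)
    finally show ?thesis .
  next
    case False
    have "map2 (-) (b[0 := b ! 0 - 1]) (y[j := y ! j + 1]) = ?V[0 := ?V ! 0 - 1, j := ?V ! j - 1]"
      using assms(1,2) False \<open>0 < length y\<close> by (intro nth_equalityI) (auto simp: nth_list_update)
    also have "abs_energy \<dots> < abs_energy ?V"
      by (rule abs_energy_decrement_pair) (use assms False \<open>0 < length y\<close> in auto)
    finally show ?thesis .
  qed
qed

section \<open>The set Omega and Young diagrams\<close>

lemma mem_Omega_iff:
  "(x, y) \<in> Omega p q \<longleftrightarrow> length x = p \<and> length y = q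
     \<and> (\<forall>i<p. 0 \<le> x ! i \<and> x ! i \<le> int q) \<and> sorted_wrt (\<ge>) x
     \<and> (\<forall>j<q. y ! j = int (card {i. i < p \<and> x ! i + int j < int q}))"
proof -
  have shift: "{i. i < p \<and> int q - x ! i \<ge> int (Suc j)} = {i. i < p \<and> x ! i + int j < int q}" for j
    by auto
  have "(\<forall>j\<in>{1..q}. y ! (j - 1) = int (card {i. i < p \<and> int q - x ! i \<ge> int j}))
          \<longleftrightarrow> (\<forall>j<q. y ! j = int (card {i. i < p \<and> x ! i + int j < int q}))"
  proof (intro iffI allI impI ballI)
    fix j assume *: "\<forall>j\<in>{1..q}. y ! (j - 1) = int (card {i. i < p \<and> int q - x ! i \<ge> int j})"
      and "j < q"
    show "y ! j = int (card {i. i < p \<and> x ! i + int j < int q})"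
    proof -
      have "Suc j \<in> {1..q}" using \<open>j < q\<close> by simp
      with * have "y ! (Suc j - 1) = int (card {i. i < p \<and> int q - x ! i \<ge> int (Suc j)})" by blast
      then show ?thesis unfolding shift by simp
    qed
  next
    fix j assume *: "\<forall>j<q. y ! j = int (card {i. i < p \<and> x ! i + int j < int q})"
      and "j \<in> {1..q}"
    show "y ! (j - 1) = int (card {i. i < p \<and> int q - x ! i \<ge> int j})"
    proof -
      have "j = Suc (j - 1)" and "j - 1 < q" using \<open>j \<in> {1..q}\<close> by auto
      with * have "y ! (j - 1) = int (card {i. i < p \<and> int q - x ! i \<ge> int (Suc (j - 1))})"
        unfolding shift by simp
      with \<open>j = Suc (j - 1)\<close> show ?thesis by simp
    qed
  qed
  then show ?thesis
    unfolding Omega_def by auto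
qed

lemma Omega_snd_bounds:
  assumes "(x, y) \<in> Omega p q" and "j < q"
  shows "0 \<le> y ! j" and "y ! j \<le> int p"
proof -
  have "card {i. i < p \<and> x ! i + int j < int q} \<le> card {..<p}"
    by (rule card_mono) auto
  then show "0 \<le> y ! j" and "y ! j \<le> int p"
    using assms unfolding mem_Omega_iff by auto
qed

lemma Omega_finite: "finite (Omega p q)"
proof (rule finite_subset)
  show "Omega p q \<subseteq> {x. set x \<subseteq> {0..int q} \<and> length x = p} \<times> {y. set y \<subseteq> {0..int p} \<and> length y = q}"
  proof
    fix t assume "t \<in> Omega p q"
    then obtain x y where t: "t = (x, y)" and xy: "(x, y) \<in> Omega p q"
      by (cases t) auto
    then show "t \<in> {x. set x \<subseteq> {0..int q} \<and> length x = p} \<times> {y. set y \<subseteq> {0..int p} \<and> length y = q}"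
      using Omega_snd_bounds[OF xy] unfolding mem_Omega_iff by (auto simp: in_set_conv_nth)
  qed
  show "finite ({x. set x \<subseteq> {0..int q} \<and> length x = p} \<times> {y. set y \<subseteq> {0..int p} \<and> length y = q})"
    by (intro finite_cartesian_product finite_lists_length_eq) auto
qed

lemma replicate_mem_Omega: "(replicate p 0, replicate q (int p)) \<in> Omega p q"
proof -
  have "{i. i < p \<and> replicate p 0 ! i + int j < int q} = {..<p}" if "j < q" for j
    using that by auto
  then show ?thesis
    unfolding mem_Omega_iff by (simp add: sorted_wrt_iff_nth_less)
qed

lemma sorted_desc_less_card_iff:
  fixes x :: "int list"
  assumes "sorted_wrt (\<ge>) x" and "i < length x"
  shows "i < card {l. l < length x \<and> t \<le> x ! l} \<longleftrightarrow> t \<le> x ! i"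
proof -
  let ?S = "{l. l < length x \<and> t \<le> x ! l}"
  have mono: "x ! l' \<le> x ! l" if "l \<le> l'" "l' < length x" for l l'
    using that assms(1) by (cases "l = l'") (auto simp: sorted_wrt_iff_nth_less)
  have fin: "finite ?S"
    by simp
  show ?thesis
  proof
    assume "t \<le> x ! i"
    then have "{..i} \<subseteq> ?S"
      using mono[of _ i] assms(2) by (auto intro: order_trans)
    from card_mono[OF fin this] show "i < card ?S"
      by simp
  next
    assume "i < card ?S"
    show "t \<le> x ! i"
    proof (rule ccontr)
      assume "\<not> t \<le> x ! i"
      then have "l < i" if "l \<in> ?S" for l
        using that mono[of i l] by (cases "l < i") auto
      then have "?S \<subseteq> {..<i}"
        by blast
      from card_mono[OF _ this] \<open>i < card ?S\<close> show False
        by simp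
    qed
  qed
qed

lemma sorted_desc_last_index_of_max:
  fixes x :: "'a::linorder list"
  assumes "sorted_wrt (\<ge>) x" and "x \<noteq> []"
  obtains k where "k < length x" and "x ! k = x ! 0" and "\<forall>i. k < i \<longrightarrow> i < length x \<longrightarrow> x ! i < x ! 0"
proof
  let ?k = "GREATEST i. i < length x \<and> x ! i = x ! 0"
  have "?k < length x \<and> x ! ?k = x ! 0"
    by (rule GreatestI_nat[of _ 0 "length x"]) (use assms(2) in auto)
  then show "?k < length x" and "x ! ?k = x ! 0"
    by auto
  show "\<forall>i. ?k < i \<longrightarrow> i < length x \<longrightarrow> x ! i < x ! 0"
  proof (intro allI impI)
    fix i assume "?k < i" and "i < length x"
    moreover have "x ! i \<le> x ! 0"
      using assms(1) \<open>i < length x\<close> by (cases i) (auto simp: sorted_wrt_iff_nth_less)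
    moreover have "x ! i \<noteq> x ! 0"
      using Greatest_le_nat[of "\<lambda>i. i < length x \<and> x ! i = x ! 0" i "length x"] \<open>?k < i\<close> \<open>i < length x\<close>
      by auto
    ultimately show "x ! i < x ! 0"
      by simp
  qed
qed

lemma card_less_plus_card_ge:
  fixes f :: "nat \<Rightarrow> 'a::linorder"
  shows "card {l. l < p \<and> f l < t} + card {l. l < p \<and> t \<le> f l} = p"
proof -
  have "card ({l. l < p \<and> f l < t} \<union> {l. l < p \<and> t \<le> f l})
          = card {l. l < p \<and> f l < t} + card {l. l < p \<and> t \<le> f l}"
    by (rule card_Un_disjoint) auto
  moreover have "{l. l < p \<and> f l < t} \<union> {l. l < p \<and> t \<le> f l} = {..<p}"
    by auto
  ultimately show ?thesis
    by simp
qed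

(* The Young diagram of y is the transpose of the complement of the diagram of x in the
   p \<times> q rectangle. *)
lemma Omega_conjugate:
  assumes om: "(x, y) \<in> Omega p q" and "i < p" and "j < q"
  shows "y ! j + int i < int p \<longleftrightarrow> int q \<le> x ! i + int j"
proof -
  have x: "length x = p" "sorted_wrt (\<ge>) x"
    and y: "y ! j = int (card {l. l < p \<and> x ! l < int q - int j})"
    using om assms(3) unfolding mem_Omega_iff by (auto simp: algebra_simps)
  have "y ! j + int i < int p \<longleftrightarrow> i < card {l. l < p \<and> int q - int j \<le> x ! l}"
    using y card_less_plus_card_ge[of p "(!) x" "int q - int j"] by linarith
  also have "\<dots> \<longleftrightarrow> int q - int j \<le> x ! i"
    using sorted_desc_less_card_iff[OF x(2), of i] x(1) assms(2) by simp
  finally show ?thesis by linarith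
qed

lemma Omega_swap:
  assumes om: "(x, y) \<in> Omega p q"
  shows "(y, x) \<in> Omega q p"
proof -
  have x: "length x = p" "\<forall>i<p. 0 \<le> x ! i \<and> x ! i \<le> int q"
    and y: "length y = q" "\<forall>j<q. y ! j = int (card {i. i < p \<and> x ! i + int j < int q})"
    using om unfolding mem_Omega_iff by auto
  have "sorted_wrt (\<ge>) y"
  proof (unfold sorted_wrt_iff_nth_less, intro allI impI)
    fix j j' assume "j < j'" and "j' < length y"
    then have "card {i. i < p \<and> x ! i + int j' < int q} \<le> card {i. i < p \<and> x ! i + int j < int q}"
      by (intro card_mono) auto
    with \<open>j < j'\<close> \<open>j' < length y\<close> show "y ! j' \<le> y ! j"
      using y by simp
  qed
  moreover have "x ! i = int (card {j. j < q \<and> y ! j + int i < int p})" if "i < p" for i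
  proof -
    have "{j. j < q \<and> y ! j + int i < int p} = {nat (int q - x ! i)..<q}"
      using Omega_conjugate[OF om that] x(2) that by auto
    moreover have "nat (int q - x ! i) \<le> q"
      using x(2) that by (auto simp: nat_le_iff)
    ultimately show ?thesis
      using x(2) that by simp
  qed
  ultimately show ?thesis
    unfolding mem_Omega_iff using x(1) y(1) Omega_snd_bounds[OF om] by auto
qed

lemma Omega_remove_box:
  assumes om: "(x, y) \<in> Omega p q" and k: "k < p" and "1 \<le> x ! k"
    and last: "\<forall>i. k < i \<longrightarrow> i < p \<longrightarrow> x ! i < x ! k"
    and j: "x ! k + int j = int q"
  shows "(x[k := x ! k - 1], y[j := y ! j + 1]) \<in> Omega p q"
proof -
  let ?x = "x[k := x ! k - 1]"
  have x: "length x = p" "\<forall>i<p. 0 \<le> x ! i \<and> x ! i \<le> int q" "sorted_wrt (\<ge>) x"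
    and y: "length y = q" "\<forall>j<q. y ! j = int (card {i. i < p \<and> x ! i + int j < int q})"
    using om unfolding mem_Omega_iff by auto
  have "j < q"
    using j \<open>1 \<le> x ! k\<close> by linarith
  have "sorted_wrt (\<ge>) ?x"
  proof (unfold sorted_wrt_iff_nth_less, intro allI impI)
    fix i i' assume "i < i'" and "i' < length ?x"
    moreover from this have "x ! i' \<le> x ! i"
      using x(3) by (simp add: sorted_wrt_iff_nth_less)
    ultimately show "?x ! i' \<le> ?x ! i"
      using last x(1) k by (auto simp: nth_list_update)
  qed
  moreover have "y[j := y ! j + 1] ! j' = int (card {i. i < p \<and> ?x ! i + int j' < int q})"
    if "j' < q" for j'
  proof -
    let ?S = "{i. i < p \<and> x ! i + int j' < int q}"
    have "{i. i < p \<and> ?x ! i + int j' < int q} = (if j' = j then insert k ?S else ?S)"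
      using k j x(1) by (auto simp: nth_list_update)
    moreover have "j' = j \<Longrightarrow> k \<notin> ?S"
      using j by simp
    ultimately show ?thesis
      using y that by (simp add: nth_list_update)
  qed
  ultimately show ?thesis
    unfolding mem_Omega_iff using x y(1) k \<open>1 \<le> x ! k\<close> by (auto simp: nth_list_update)
qed

section \<open>Lowering the spin norm\<close>

lemma spin_norm_less_if_improvable:
  assumes "\<And>\<tau>. \<tau> \<in> Omega p q \<Longrightarrow> \<exists>\<tau>'\<in>Omega p q. knorm p q (wsub \<nu>' \<tau>') < knorm p q (wsub \<nu> \<tau>)"
  shows "spin_norm p q \<nu>' < spin_norm p q \<nu>"
proof -
  let ?f = "\<lambda>\<nu> \<tau>. knorm p q (wsub \<nu> \<tau>)"
  have "spin_norm p q \<nu> \<in> ?f \<nu> ` Omega p q"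
    unfolding spin_norm_def using Omega_finite replicate_mem_Omega[of p q] by (intro Min_in) auto
  then obtain \<tau> where "\<tau> \<in> Omega p q" and min: "spin_norm p q \<nu> = ?f \<nu> \<tau>"
    by blast
  then obtain \<tau>' where "\<tau>' \<in> Omega p q" and less: "?f \<nu>' \<tau>' < ?f \<nu> \<tau>"
    using assms by blast
  then have "spin_norm p q \<nu>' \<le> ?f \<nu>' \<tau>'"
    unfolding spin_norm_def using Omega_finite by (intro Min_le) auto
  with less min show ?thesis
    by simp
qed

lemma wsub_beta:
  assumes "length a = p" and "length b = q" and "1 \<le> p" and "1 \<le> q"
  shows "wsub (a, b) (beta p q) = (a[0 := a ! 0 - 1], b[0 := b ! 0 - 1])"
proof -
  have "map2 (-) c (1 # replicate (length c - 1) 0) = c[0 := c ! 0 - 1]" if "c \<noteq> []" for c :: "int list"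
    by (rule nth_equalityI) (use that in \<open>auto simp: nth_list_update nth_Cons split: nat.splits\<close>)
  moreover have "a \<noteq> []" and "b \<noteq> []"
    using assms by auto
  ultimately show ?thesis
    using assms(1,2) unfolding wsub_def beta_def by auto
qed

lemma knorm_decrement_heads_less:
  assumes "length a = p" and "length b = q" and "length x = p" and "length y = q"
    and "0 < p" and "0 < q" and "x ! 0 < a ! 0" and "y ! 0 < b ! 0"
  shows "knorm p q (wsub (a[0 := a ! 0 - 1], b[0 := b ! 0 - 1]) (x, y)) < knorm p q (wsub (a, b) (x, y))"
proof -
  let ?U = "map2 (-) a x" and ?V = "map2 (-) b y"
  have "map2 (-) (a[0 := a ! 0 - 1]) x = ?U[0 := ?U ! 0 - 1]"
    and "map2 (-) (b[0 := b ! 0 - 1]) y = ?V[0 := ?V ! 0 - 1]"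
    using assms(1-6) by (simp_all add: map2_minus_update_left algebra_simps)
  moreover have "abs_energy (?U[0 := ?U ! 0 - 1]) < abs_energy ?U"
    by (rule abs_energy_decrement) (use assms in simp_all)
  moreover have "abs_energy (?V[0 := ?V ! 0 - 1]) < abs_energy ?V"
    by (rule abs_energy_decrement) (use assms in simp_all)
  ultimately show ?thesis
    unfolding wsub_def using assms(1-4) by (simp add: knorm_less_knorm)
qed

lemma knorm_decrement_heads_less_by_removing_box:
  assumes la: "length a = p" and lb: "length b = q" and om: "(x, y) \<in> Omega p q" and "0 < p"
    and a0: "1 \<le> a ! 0" "a ! 0 \<le> x ! 0" and a_tail: "\<forall>i. 0 < i \<longrightarrow> i < p \<longrightarrow> a ! i < a ! 0"
    and b_nonneg: "\<forall>j<q. 0 \<le> b ! j" and b0: "int p + 1 \<le> b ! 0 - y ! 0"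
  shows "\<exists>\<tau>'\<in>Omega p q. knorm p q (wsub (a[0 := a ! 0 - 1], b[0 := b ! 0 - 1]) \<tau>')
                          < knorm p q (wsub (a, b) (x, y))"
proof -
  have x: "length x = p" "sorted_wrt (\<ge>) x" "x ! 0 \<le> int q" and ly: "length y = q"
    using om \<open>0 < p\<close> unfolding mem_Omega_iff by auto
  obtain k where k: "k < p" "x ! k = x ! 0" "\<forall>i. k < i \<longrightarrow> i < p \<longrightarrow> x ! i < x ! 0"
    using sorted_desc_last_index_of_max[OF x(2)] x(1) \<open>0 < p\<close> by auto
  define j where "j = nat (int q - x ! 0)"
  have j: "x ! k + int j = int q" "j < q"
    using k(2) a0 x(3) unfolding j_def by auto
  have om': "(x[k := x ! k - 1], y[j := y ! j + 1]) \<in> Omega p q"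
    by (rule Omega_remove_box) (use om k j a0 in auto)
  have "y ! j < int p"
    using Omega_conjugate[OF om \<open>0 < p\<close> \<open>j < q\<close>] j k by simp
  moreover have "0 \<le> y ! j" and "0 \<le> y ! 0"
    using Omega_snd_bounds[OF om] \<open>j < q\<close> by auto
  ultimately have "abs_energy (map2 (-) (b[0 := b ! 0 - 1]) (y[j := y ! j + 1])) < abs_energy (map2 (-) b y)"
    using lb ly b_nonneg b0 j by (intro abs_energy_lower_head_raise_partner_less) auto
  moreover have "abs_energy (map2 (-) (a[0 := a ! 0 - 1]) (x[k := x ! k - 1])) \<le> abs_energy (map2 (-) a x)"
    using la x(1) k a0 a_tail by (intro abs_energy_lower_max_part_le) auto
  ultimately have "knorm p q (wsub (a[0 := a ! 0 - 1], b[0 := b ! 0 - 1]) (x[k := x ! k - 1], y[j := y ! j + 1]))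
                     < knorm p q (wsub (a, b) (x, y))"
    unfolding wsub_def using la lb x(1) ly by (intro knorm_less_knorm) auto
  with om' show ?thesis
    by blast
qed

lemma k_dominant_wsub_beta_fst:
  assumes "length a = p" and "length b = q" and "1 \<le> p" and "1 \<le> q"
    and "k_dominant (wsub (a, b) (beta p q))"
  shows "1 \<le> a ! 0" and "\<forall>i. 0 < i \<longrightarrow> i < p \<longrightarrow> a ! i < a ! 0"
proof -
  have "a ! 0 - 1 \<in> set (a[0 := a ! 0 - 1])"
    by (rule set_update_memI) (use assms in simp)
  moreover have sorted: "sorted_wrt (\<ge>) (a[0 := a ! 0 - 1])"
    using assms(5) unfolding wsub_beta[OF assms(1-4)] k_dominant_def by simp
  ultimately show "1 \<le> a ! 0"
    using assms(5) unfolding wsub_beta[OF assms(1-4)] k_dominant_def by auto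
  show "\<forall>i. 0 < i \<longrightarrow> i < p \<longrightarrow> a ! i < a ! 0"
  proof (intro allI impI)
    fix i assume "0 < i" and "i < p"
    then have "a[0 := a ! 0 - 1] ! i \<le> a[0 := a ! 0 - 1] ! 0"
      using sorted_wrt_nth_less[OF sorted, of 0 i] assms(1) by simp
    with \<open>0 < i\<close> \<open>i < p\<close> assms(1) show "a ! i < a ! 0"
      by simp
  qed
qed

lemma spin_norm_wsub_beta_less:
  assumes la: "length a = p" and lb: "length b = q" and "1 \<le> p" and "1 \<le> q"
    and dom: "k_dominant (a, b)" and dom_beta: "k_dominant (wsub (a, b) (beta p q))"
    and b0: "2 * int p + 1 \<le> b ! 0"
  shows "spin_norm p q (wsub (a, b) (beta p q)) < spin_norm p q (a, b)"
proof (rule spin_norm_less_if_improvable)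
  have beta: "wsub (a, b) (beta p q) = (a[0 := a ! 0 - 1], b[0 := b ! 0 - 1])"
    by (rule wsub_beta) (use assms in auto)
  note a0 = k_dominant_wsub_beta_fst[OF la lb assms(3,4) dom_beta]
  have b_nonneg: "\<forall>j<q. 0 \<le> b ! j"
    using dom lb unfolding k_dominant_def by auto
  fix \<tau> assume "\<tau> \<in> Omega p q"
  then obtain x y where om: "(x, y) \<in> Omega p q" and \<tau>: "\<tau> = (x, y)"
    by (cases \<tau>) auto
  have "y ! 0 \<le> int p"
    using Omega_snd_bounds[OF om] \<open>1 \<le> q\<close> by simp
  show "\<exists>\<tau>'\<in>Omega p q. knorm p q (wsub (wsub (a, b) (beta p q)) \<tau>') < knorm p q (wsub (a, b) \<tau>)"
  proof (cases "x ! 0 < a ! 0")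
    case True
    have "knorm p q (wsub (wsub (a, b) (beta p q)) (x, y)) < knorm p q (wsub (a, b) (x, y))"
      unfolding beta using om la lb True b0 \<open>y ! 0 \<le> int p\<close> assms(3,4)
      by (intro knorm_decrement_heads_less) (auto simp: mem_Omega_iff)
    with om \<tau> show ?thesis
      by blast
  next
    case False
    then show ?thesis
      unfolding beta \<tau> using om la lb assms(3) a0 b_nonneg b0 \<open>y ! 0 \<le> int p\<close>
      by (intro knorm_decrement_heads_less_by_removing_box) auto
  qed
qed

section \<open>Exchanging the two blocks\<close>

lemma knorm_swap: "knorm q p (prod.swap v) = knorm p q v"
  unfolding knorm_def wnorm_def wadd_def brace_def rho_c_def by (cases v) (simp add: add.commute)

lemma wsub_swap: "wsub (prod.swap v) (prod.swap \<tau>) = prod.swap (wsub v \<tau>)"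
  by (simp add: wsub_def)

lemma beta_swap: "beta q p = prod.swap (beta p q)"
  by (simp add: beta_def)

lemma k_dominant_swap: "k_dominant (prod.swap v) \<longleftrightarrow> k_dominant v"
  unfolding k_dominant_def by auto

lemma Omega_swap_image: "prod.swap ` Omega p q = Omega q p"
proof
  show "prod.swap ` Omega p q \<subseteq> Omega q p"
    using Omega_swap by auto
  show "Omega q p \<subseteq> prod.swap ` Omega p q"
  proof (clarify)
    fix y x assume "(y, x) \<in> Omega q p"
    then have "(x, y) \<in> Omega p q"
      by (rule Omega_swap)
    then show "(y, x) \<in> prod.swap ` Omega p q"
      by force
  qed
qed

lemma spin_norm_swap: "spin_norm q p (prod.swap v) = spin_norm p q v"
proof -
  have "(\<lambda>\<tau>. knorm q p (wsub (prod.swap v) \<tau>)) ` Omega q p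
          = (\<lambda>\<tau>. knorm q p (wsub (prod.swap v) (prod.swap \<tau>))) ` Omega p q"
    using image_image[of "\<lambda>\<tau>. knorm q p (wsub (prod.swap v) \<tau>)" prod.swap "Omega p q"]
    by (simp only: Omega_swap_image)
  also have "\<dots> = (\<lambda>\<tau>. knorm p q (wsub v \<tau>)) ` Omega p q"
    by (simp only: wsub_swap knorm_swap)
  finally show ?thesis
    by (simp add: spin_norm_def)
qed

theorem proposition3p1:
  fixes p q :: nat and a b :: "int list"
  assumes "1 \<le> p" and "p \<le> q"
    and "length a = p" and "length b = q"
    and "k_dominant (a, b)"
    and "u_large p q (a, b)"
    and "k_dominant (wsub (a, b) (beta p q))"
  shows "(b ! 0 \<ge> 2 * int p + 1 \<longrightarrow> spin_norm p q (a, b) > spin_norm p q (wsub (a, b) (beta p q)))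
       \<and> (a ! 0 \<ge> 2 * int q + 1 \<longrightarrow> spin_norm p q (a, b) > spin_norm p q (wsub (a, b) (beta p q)))"
proof (intro conjI impI)
  have "1 \<le> q"
    using assms(1,2) by linarith
  show "spin_norm p q (a, b) > spin_norm p q (wsub (a, b) (beta p q))" if "b ! 0 \<ge> 2 * int p + 1"
    using spin_norm_wsub_beta_less[OF assms(3,4,1) \<open>1 \<le> q\<close> assms(5,7) that] .
  show "spin_norm p q (a, b) > spin_norm p q (wsub (a, b) (beta p q))" if "a ! 0 \<ge> 2 * int q + 1"
  proof -
    have swapped: "wsub (b, a) (beta q p) = prod.swap (wsub (a, b) (beta p q))"
      unfolding beta_swap[of q p] wsub_swap[symmetric] by simp
    have "spin_norm q p (wsub (b, a) (beta q p)) < spin_norm q p (b, a)"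
    proof (rule spin_norm_wsub_beta_less)
      show "k_dominant (b, a)"
        using k_dominant_swap[of "(a, b)"] assms(5) by simp
      show "k_dominant (wsub (b, a) (beta q p))"
        unfolding swapped k_dominant_swap by (rule assms(7))
    qed (use assms \<open>1 \<le> q\<close> that in auto)
    then show ?thesis
      using spin_norm_swap[of q p "(a, b)"] spin_norm_swap[of q p "wsub (a, b) (beta p q)"]
      unfolding swapped by simp
  qed
qed

end
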